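(* Under the setup in the context (no assumption that $\hat\beta_{ols}\neq\hat\beta_{2sls}$), one has $\hat\sigma_{2sls}^2\ge\hat\sigma_{ols}^2\ge\hat\sigma_u^2$ and $t_{CF}\ge t_{H_1}\ge t_{H_2}\ge t_{H_3}$.
   Context: Data: $Y_1$ is an $n\times k_1$ matrix, $Y_2$ an $n\times 1$ vector, $Z_1$ an $n\times p_1$ matrix, $Z_2$ an $n\times p_2$ matrix, all real; $Z\equiv(Z_1,Z_2)$ and $X\equiv(Y_1,Z_1)$. For a matrix $A$ with $A^\top A$ nonsingular, $P_A\equiv A(A^\top A)^{-1}A^\top$ and $M_A\equiv I_n-P_A$. Standing assumptions: $Z^\top Z$, $X^\top X$, $X^\top P_Z X$ and $(X,\hat V)^\top(X,\hat V)$ are nonsingular, where $\hat V\equiv M_Z Y_1$. Define $\hat Y_1\equiv P_Z Y_1$, $\hat\theta_{ols}\equiv(X^\top X)^{-1}X^\top Y_2$, $\hat\theta_{2sls}\equiv(X^\top P_ZX)^{-1}X^\top P_Z Y_2$, and let $\hat\beta_{ols},\hat\beta_{2sls}$ be the leading $k_1\times1$ subvectors of $\hat\theta_{ols},\hat\theta_{2sls}$. Define $(\hat\theta_{cf}^\top,\hat\rho_{cf}^\top)^\top\equiv((X,\hat V)^\top(X,\hat V))^{-1}(X,\hat V)^\top Y_2$, $\hat\sigma_u^2\equiv n^{-1}\|Y_2-X\hat\theta_{cf}-\hat V\hat\rho_{cf}\|^2$, $\hat\sigma_{ols}^2\equiv n^{-1}\|Y_2-X\hat\theta_{ols}\|^2$,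 $\hat\sigma_{2sls}^2\equiv n^{-1}\|Y_2-X\hat\theta_{2sls}\|^2$; these three are assumed strictly positive. For scalars $s_1^2,s_2^2>0$ with $s_1^2(\hat Y_1^\top M_{Z_1}\hat Y_1)^{-1}-s_2^2(Y_1^\top M_{Z_1}Y_1)^{-1}$ nonsingular, $t_{H,n}(s_1^2,s_2^2)\equiv(\hat\beta_{ols}-\hat\beta_{2sls})^\top\big(s_1^2(\hat Y_1^\top M_{Z_1}\hat Y_1)^{-1}-s_2^2(Y_1^\top M_{Z_1}Y_1)^{-1}\big)^{-1}(\hat\beta_{ols}-\hat\beta_{2sls})$. Define $t_{H_1}\equiv t_{H,n}(\hat\sigma_{ols}^2,\hat\sigma_{ols}^2)$, $t_{H_2}\equiv t_{H,n}(\hat\sigma_{2sls}^2,\hat\sigma_{2sls}^2)$, $t_{H_3}\equiv t_{H,n}(\hat\sigma_{2sls}^2,\hat\sigma_{ols}^2)$, and the Wald statistic $t_{CF}\equiv\hat\rho_{cf}^\top\big(\hat\sigma_u^2(\hat V^\top M_X\hat V)^{-1}\big)^{-1}\hat\rho_{cf}$. *)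

theory Defs
  imports "HOL-Analysis.Analysis"
begin

text \<open>Matrices are type-indexed: an n x k matrix is real^'k^'n (rows indexed by 'n),
 column vectors of length n are real^'n.\<close>

definition hcat :: "real^'a^'n \<Rightarrow> real^'b^'n \<Rightarrow> real^('a + 'b)^'n" where
  "hcat A B = (\<chi> i j. case j of Inl a \<Rightarrow> A $ i $ a | Inr b \<Rightarrow> B $ i $ b)"

definition proj :: "real^'c^'n \<Rightarrow> real^'n^'n" where
  "proj A = A ** matrix_inv (transpose A ** A) ** transpose A"

definition resid :: "real^'c^'n \<Rightarrow> real^'n^'n" where
  "resid A = mat 1 - proj A"

definition lead :: "real^('a::finite + 'b::finite) \<Rightarrow> real^'a" where
  "lead v = (\<chi> a. v $ Inl a)"

definition trail :: "real^('a::finite + 'b::finite) \<Rightarrow> real^'b" where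
  "trail v = (\<chi> b. v $ Inr b)"

definition Zmat :: "real^'p1^'n \<Rightarrow> real^'p2^'n \<Rightarrow> real^('p1 + 'p2)^'n" where
  "Zmat Z1 Z2 = hcat Z1 Z2"

definition Xmat :: "real^'k^'n \<Rightarrow> real^'p1^'n \<Rightarrow> real^('k + 'p1)^'n" where
  "Xmat Y1 Z1 = hcat Y1 Z1"

definition Vhat :: "real^'k^'n \<Rightarrow> real^'p1^'n \<Rightarrow> real^'p2^'n \<Rightarrow> real^'k^'n" where
  "Vhat Y1 Z1 Z2 = resid (Zmat Z1 Z2) ** Y1"

definition Yhat1 :: "real^'k^'n \<Rightarrow> real^'p1^'n \<Rightarrow> real^'p2^'n \<Rightarrow> real^'k^'n" where
  "Yhat1 Y1 Z1 Z2 = proj (Zmat Z1 Z2) ** Y1"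

definition theta_ols :: "real^'k^'n \<Rightarrow> real^'n \<Rightarrow> real^'p1^'n \<Rightarrow> real^('k + 'p1)" where
  "theta_ols Y1 Y2 Z1 = (let X = Xmat Y1 Z1 in
     matrix_inv (transpose X ** X) *v (transpose X *v Y2))"

definition theta_2sls :: "real^'k^'n \<Rightarrow> real^'n \<Rightarrow> real^'p1^'n \<Rightarrow> real^'p2^'n \<Rightarrow> real^('k + 'p1)" where
  "theta_2sls Y1 Y2 Z1 Z2 = (let X = Xmat Y1 Z1; P = proj (Zmat Z1 Z2) in
     matrix_inv (transpose X ** P ** X) *v (transpose X *v (P *v Y2)))"

definition beta_ols where "beta_ols Y1 Y2 Z1 = lead (theta_ols Y1 Y2 Z1)"
definition beta_2sls where "beta_2sls Y1 Y2 Z1 Z2 = lead (theta_2sls Y1 Y2 Z1 Z2)"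

definition cf_coef :: "real^'k^'n \<Rightarrow> real^'n \<Rightarrow> real^'p1^'n \<Rightarrow> real^'p2^'n \<Rightarrow> real^(('k + 'p1) + 'k)" where
  "cf_coef Y1 Y2 Z1 Z2 = (let W = hcat (Xmat Y1 Z1) (Vhat Y1 Z1 Z2) in
     matrix_inv (transpose W ** W) *v (transpose W *v Y2))"

definition theta_cf where "theta_cf Y1 Y2 Z1 Z2 = lead (cf_coef Y1 Y2 Z1 Z2)"
definition rho_cf where "rho_cf Y1 Y2 Z1 Z2 = trail (cf_coef Y1 Y2 Z1 Z2)"

definition sigma2_u :: "real^'k^'n \<Rightarrow> real^'n \<Rightarrow> real^'p1^'n \<Rightarrow> real^'p2^'n \<Rightarrow> real" where
  "sigma2_u Y1 Y2 Z1 Z2 = (norm (Y2 - Xmat Y1 Z1 *v theta_cf Y1 Y2 Z1 Z2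
       - Vhat Y1 Z1 Z2 *v rho_cf Y1 Y2 Z1 Z2))\<^sup>2 / real CARD('n)"

definition sigma2_ols :: "real^'k^'n \<Rightarrow> real^'n \<Rightarrow> real^'p1^'n \<Rightarrow> real" where
  "sigma2_ols Y1 Y2 Z1 = (norm (Y2 - Xmat Y1 Z1 *v theta_ols Y1 Y2 Z1))\<^sup>2 / real CARD('n)"

definition sigma2_2sls :: "real^'k^'n \<Rightarrow> real^'n \<Rightarrow> real^'p1^'n \<Rightarrow> real^'p2^'n \<Rightarrow> real" where
  "sigma2_2sls Y1 Y2 Z1 Z2 = (norm (Y2 - Xmat Y1 Z1 *v theta_2sls Y1 Y2 Z1 Z2))\<^sup>2 / real CARD('n)"

definition hmat :: "real^'k^'n \<Rightarrow> real^'p1^'n \<Rightarrow> real^'p2^'n \<Rightarrow> real \<Rightarrow> real \<Rightarrow> real^'k^'k" where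
  "hmat Y1 Z1 Z2 s1 s2 = (let Yh = Yhat1 Y1 Z1 Z2; M = resid Z1 in
     s1 *\<^sub>R matrix_inv (transpose Yh ** M ** Yh) - s2 *\<^sub>R matrix_inv (transpose Y1 ** M ** Y1))"

definition tH :: "real^'k^'n \<Rightarrow> real^'n \<Rightarrow> real^'p1^'n \<Rightarrow> real^'p2^'n \<Rightarrow> real \<Rightarrow> real \<Rightarrow> real" where
  "tH Y1 Y2 Z1 Z2 s1 s2 = (let d = beta_ols Y1 Y2 Z1 - beta_2sls Y1 Y2 Z1 Z2 in
     d \<bullet> (matrix_inv (hmat Y1 Z1 Z2 s1 s2) *v d))"

definition tCF :: "real^'k^'n \<Rightarrow> real^'n \<Rightarrow> real^'p1^'n \<Rightarrow> real^'p2^'n \<Rightarrow> real" where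
  "tCF Y1 Y2 Z1 Z2 = (let rho = rho_cf Y1 Y2 Z1 Z2; V = Vhat Y1 Z1 Z2 in
     rho \<bullet> (matrix_inv (sigma2_u Y1 Y2 Z1 Z2 *\<^sub>R
        matrix_inv (transpose V ** resid (Xmat Y1 Z1) ** V)) *v rho))"

end

theory Submission
  imports Defs
begin

text \<open>The control-function regression of \<open>Y\<^sub>2\<close> on \<open>(X, V)\<close> reproduces the 2SLS
  coefficients: since \<open>P\<^sub>Z (Y\<^sub>1, Z\<^sub>1) = (Y\<^sub>1 - V, Z\<^sub>1)\<close>, its residual, orthogonal to \<open>X\<close>
  and \<open>V\<close>, is orthogonal to \<open>P\<^sub>Z X\<close>. The variance inequalities are then least-squares minimality: the
  control-function regression nests OLS, and OLS beats every coefficient vector, in particular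
  the 2SLS one.

  For the test statistics write \<open>A = Yh' M\<^sub>Z\<^sub>1 Yh\<close> with \<open>Yh = P\<^sub>Z Y\<^sub>1\<close>, \<open>B = V'V\<close> and
  \<open>C = Y\<^sub>1' M\<^sub>Z\<^sub>1 Y\<^sub>1 = A + B\<close>. Comparing the OLS and control-function normal equations gives
  \<open>C d = B \<rho>\<close> for \<open>d = \<beta>\<^sub>o\<^sub>l\<^sub>s - \<beta>\<^sub>2\<^sub>s\<^sub>l\<^sub>s\<close>, hence \<open>(A\<inverse> - C\<inverse>) A \<rho> = d\<close> and
  \<open>d' (A\<inverse> - C\<inverse>)\<inverse> d = \<rho>' V' M\<^sub>X V \<rho> =: q\<close>. So \<open>t\<^sub>C\<^sub>F = q / \<sigma>\<^sub>u\<^sup>2\<close> and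
  \<open>t\<^sub>H(s, s) = q / s\<close>, which orders \<open>t\<^sub>C\<^sub>F \<ge> t\<^sub>H\<^sub>1 \<ge> t\<^sub>H\<^sub>2\<close>. Finally
  \<open>t\<^sub>H\<^sub>3 \<le> t\<^sub>H\<^sub>2\<close> because the matrix of \<open>t\<^sub>H\<^sub>3\<close> is that of \<open>t\<^sub>H\<^sub>2\<close>, which is positive
  semidefinite since \<open>A \<le> C\<close>, plus the positive semidefinite \<open>(\<sigma>\<^sub>2\<^sub>s\<^sub>l\<^sub>s\<^sup>2 - \<sigma>\<^sub>o\<^sub>l\<^sub>s\<^sup>2) C\<inverse>\<close>,
  and a larger matrix has a smaller inverse quadratic form.\<close>

declare transpose_matrix_vector[simp del]

section \<open>Inverse matrices\<close>

lemma
  fixes M :: "real^'k^'k"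
  assumes "invertible M"
  shows matrix_inv_right: "M ** matrix_inv M = mat 1"
    and matrix_inv_left: "matrix_inv M ** M = mat 1"
proof -
  have "\<exists>M'. M ** M' = mat 1 \<and> M' ** M = mat 1"
    using assms unfolding invertible_def by blast
  then have "M ** matrix_inv M = mat 1 \<and> matrix_inv M ** M = mat 1"
    unfolding matrix_inv_def by (rule someI_ex)
  then show "M ** matrix_inv M = mat 1" "matrix_inv M ** M = mat 1" by auto
qed

lemma matrix_inv_cancel_left: "invertible (M::real^'k^'k) \<Longrightarrow> matrix_inv M *v (M *v x) = x"
  by (simp add: matrix_inv_left matrix_vector_mul_assoc)

lemma matrix_inv_cancel_right: "invertible (M::real^'k^'k) \<Longrightarrow> M *v (matrix_inv M *v x) = x"
  by (simp add: matrix_inv_right matrix_vector_mul_assoc)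

lemma invertible_iff_ker: "invertible (M::real^'k^'k) \<longleftrightarrow> (\<forall>x. M *v x = 0 \<longrightarrow> x = 0)"
  by (simp add: invertible_left_inverse matrix_left_invertible_ker)

lemma matrix_inv_unique:
  fixes N B :: "real^'k^'k"
  assumes "invertible N" "N ** B = mat 1"
  shows "matrix_inv N = B"
proof -
  have "matrix_inv N = matrix_inv N ** (N ** B)" by (simp add: assms(2))
  also have "\<dots> = B" by (metis matrix_mul_assoc matrix_inv_left assms(1) matrix_mul_lid)
  finally show ?thesis .
qed

lemma matrix_inv_scaleR:
  fixes M :: "real^'k^'k"
  assumes "invertible M" "c \<noteq> 0"
  shows "matrix_inv (c *\<^sub>R M) = (1/c) *\<^sub>R matrix_inv M"
  using assms
  by (intro matrix_inv_unique) (simp_all add: scalar_invertible matrix_scalar_ac matrix_inv_right)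

lemma
  fixes M :: "real^'k^'k"
  assumes "invertible M"
  shows invertible_matrix_inv: "invertible (matrix_inv M)"
    and matrix_inv_matrix_inv: "matrix_inv (matrix_inv M) = M"
proof -
  show inv: "invertible (matrix_inv M)"
    using matrix_inv_left[OF assms] matrix_inv_right[OF assms] invertible_def by blast
  show "matrix_inv (matrix_inv M) = M"
    by (rule matrix_inv_unique[OF inv]) (simp add: matrix_inv_left assms)
qed

lemma matrix_vector_mult_uminus: "(M::real^'a^'b) *v (- x) = - (M *v x)"
  by (metis diff_0 matrix_vector_mult_diff_distrib matrix_vector_mult_0_right)

lemma matrix_mult3_vector: "(A ** B ** C) *v x = A *v (B *v (C *v x))"
  by (simp add: matrix_vector_mul_assoc matrix_mul_assoc)

section \<open>Bilinear and quadratic forms\<close>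

lemma inner_matrix_vector_transpose: "x \<bullet> (M *v y) = (transpose M *v x) \<bullet> (y::real^'a)"
  by (simp add: dot_lmul_matrix transpose_matrix_vector)

lemma inner_transpose_matrix_vector: "x \<bullet> (transpose M *v y) = (M *v x) \<bullet> (y::real^'a)"
  by (metis inner_matrix_vector_transpose transpose_transpose)

lemma vec_eq_if_inner_eq: "(\<And>v. v \<bullet> (a::real^'a) = v \<bullet> b) \<Longrightarrow> a = b"
  by (metis eq_iff_diff_eq_0 inner_diff_right inner_eq_zero_iff)

lemma matrix_eq_if_bilinear_eq: "(\<And>x y. x \<bullet> ((M::real^'a^'b) *v y) = x \<bullet> (N *v y)) \<Longrightarrow> M = N"
  unfolding matrix_eq using vec_eq_if_inner_eq by metis

lemma bilinear_congruence:
  "x \<bullet> ((transpose Y ** N ** Y) *v y) = (Y *v x) \<bullet> (N *v (Y *v (y::real^'a)))"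
  by (simp add: matrix_mult3_vector inner_transpose_matrix_vector)

lemma bilinear_gram: "x \<bullet> ((transpose Y ** Y) *v y) = (Y *v x) \<bullet> (Y *v (y::real^'a))"
  by (simp add: matrix_vector_mul_assoc[symmetric] inner_transpose_matrix_vector)

definition sym_matrix :: "real^'k^'k \<Rightarrow> bool" where
  "sym_matrix M \<longleftrightarrow> (\<forall>x y. x \<bullet> (M *v y) = (M *v x) \<bullet> y)"

definition psd_matrix :: "real^'k^'k \<Rightarrow> bool" where
  "psd_matrix M \<longleftrightarrow> (\<forall>x. 0 \<le> x \<bullet> (M *v x))"

lemma sym_matrix_diff: "sym_matrix M \<Longrightarrow> sym_matrix N \<Longrightarrow> sym_matrix (M - N)"
  unfolding sym_matrix_def
  by (simp add: matrix_vector_mult_diff_rdistrib inner_diff_left inner_diff_right)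

lemma sym_matrix_scaleR: "sym_matrix M \<Longrightarrow> sym_matrix (c *\<^sub>R M)"
  unfolding sym_matrix_def by (simp add: scaleR_matrix_vector_assoc[symmetric])

lemma psd_matrix_scaleR: "psd_matrix M \<Longrightarrow> 0 \<le> c \<Longrightarrow> psd_matrix (c *\<^sub>R M)"
  unfolding psd_matrix_def by (simp add: scaleR_matrix_vector_assoc[symmetric])

lemma sym_matrix_congruence: "sym_matrix N \<Longrightarrow> sym_matrix (transpose Y ** N ** Y)"
  unfolding sym_matrix_def by (metis bilinear_congruence inner_commute)

lemma psd_matrix_congruence: "psd_matrix N \<Longrightarrow> psd_matrix (transpose Y ** N ** Y)"
  unfolding psd_matrix_def by (simp add: bilinear_congruence)

lemma sym_matrix_gram: "sym_matrix (transpose Y ** Y)"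
  unfolding sym_matrix_def by (metis bilinear_gram inner_commute)

lemma psd_matrix_gram: "psd_matrix (transpose Y ** Y)"
  unfolding psd_matrix_def by (simp add: bilinear_gram)

lemma sym_matrix_matrix_inv:
  assumes "sym_matrix M" "invertible M"
  shows "sym_matrix (matrix_inv M)"
  unfolding sym_matrix_def
proof (intro allI)
  fix x y
  have "x \<bullet> (matrix_inv M *v y) = (M *v (matrix_inv M *v x)) \<bullet> (matrix_inv M *v y)"
    by (simp add: matrix_inv_cancel_right assms)
  also have "\<dots> = (matrix_inv M *v x) \<bullet> (M *v (matrix_inv M *v y))"
    using assms(1) unfolding sym_matrix_def by metis
  also have "\<dots> = (matrix_inv M *v x) \<bullet> y" by (simp add: matrix_inv_cancel_right assms)
  finally show "x \<bullet> (matrix_inv M *v y) = (matrix_inv M *v x) \<bullet> y" .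
qed

lemma psd_matrix_matrix_inv:
  assumes "psd_matrix M" "invertible M"
  shows "psd_matrix (matrix_inv M)"
  unfolding psd_matrix_def
proof
  fix x
  have "x \<bullet> (matrix_inv M *v x) = (matrix_inv M *v x) \<bullet> (M *v (matrix_inv M *v x))"
    by (simp add: matrix_inv_cancel_right assms inner_commute)
  then show "0 \<le> x \<bullet> (matrix_inv M *v x)" using assms(1) unfolding psd_matrix_def by metis
qed

text \<open>With \<open>y = (P + Q)\<inverse> x\<close> and \<open>z = P\<inverse> x\<close>, expand \<open>0 \<le> (z - y)' P (z - y)\<close> and use
  \<open>y' P y \<le> y' (P + Q) y = x' y\<close>.\<close>
lemma quadratic_form_matrix_inv_antimono:
  fixes P Q :: "real^'k^'k"
  assumes sP: "sym_matrix P" and pP: "psd_matrix P" and iP: "invertible P"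
    and pQ: "psd_matrix Q" and iPQ: "invertible (P + Q)"
  shows "x \<bullet> (matrix_inv (P + Q) *v x) \<le> x \<bullet> (matrix_inv P *v x)"
proof -
  define y where "y = matrix_inv (P + Q) *v x"
  define z where "z = matrix_inv P *v x"
  have Py: "P *v y + Q *v y = x"
    using matrix_inv_cancel_right[OF iPQ] by (simp add: y_def algebra_simps)
  have Pz: "P *v z = x" using matrix_inv_cancel_right[OF iP] by (simp add: z_def)
  have "0 \<le> (z - y) \<bullet> (P *v (z - y))" using pP unfolding psd_matrix_def by blast
  also have "\<dots> = z \<bullet> (P *v z) - z \<bullet> (P *v y) - y \<bullet> (P *v z) + y \<bullet> (P *v y)"
    by (simp add: algebra_simps inner_diff_left inner_diff_right)
  also have "z \<bullet> (P *v y) = (P *v z) \<bullet> y" using sP unfolding sym_matrix_def by blast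
  finally have expand: "0 \<le> z \<bullet> x - 2 * (x \<bullet> y) + y \<bullet> (P *v y)"
    by (simp add: Pz inner_commute)
  have "y \<bullet> x = y \<bullet> (P *v y) + y \<bullet> (Q *v y)" using Py by (metis inner_add_right)
  moreover have "0 \<le> y \<bullet> (Q *v y)" using pQ unfolding psd_matrix_def by blast
  ultimately have "y \<bullet> (P *v y) \<le> x \<bullet> y" by (simp add: inner_commute)
  with expand have "x \<bullet> y \<le> z \<bullet> x" by linarith
  then show ?thesis by (simp add: y_def z_def inner_commute)
qed

lemma hausman_quadratic_form:
  fixes A B C :: "real^'k^'k"
  assumes sum: "C = A + B" and symA: "sym_matrix A" and symB: "sym_matrix B"
    and invA: "invertible A" and invC: "invertible C"
    and invD: "invertible (matrix_inv A - matrix_inv C)" and eq: "C *v d = B *v r"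
  shows "d \<bullet> (matrix_inv (matrix_inv A - matrix_inv C) *v d) = r \<bullet> (B *v r) - d \<bullet> (B *v r)"
proof -
  let ?D = "matrix_inv A - matrix_inv C"
  have "?D *v (A *v r) = d"
  proof -
    have Ar: "A *v r = C *v r - B *v r" by (simp add: sum matrix_vector_mult_add_rdistrib)
    have "matrix_inv C *v (A *v r) = r - d"
      by (simp add: Ar matrix_vector_mult_diff_distrib matrix_inv_cancel_left[OF invC] eq[symmetric])
    then show ?thesis
      by (simp add: matrix_vector_mult_diff_rdistrib matrix_inv_cancel_left[OF invA])
  qed
  then have "matrix_inv ?D *v d = A *v r"
    using matrix_inv_cancel_left[OF invD, of "A *v r"] by simp
  then have "d \<bullet> (matrix_inv ?D *v d) = r \<bullet> (A *v d)"
    using symA unfolding sym_matrix_def by (metis inner_commute)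
  also have "\<dots> = r \<bullet> (C *v d) - r \<bullet> (B *v d)"
    by (simp add: sum matrix_vector_mult_add_rdistrib inner_add_right)
  also have "r \<bullet> (B *v d) = d \<bullet> (B *v r)"
    using symB unfolding sym_matrix_def by (metis inner_commute)
  finally show ?thesis by (simp add: eq)
qed

section \<open>Least squares\<close>

lemma invertible_gram_iff:
  fixes A :: "real^'c^'n"
  shows "invertible (transpose A ** A) \<longleftrightarrow> (\<forall>u. A *v u = 0 \<longrightarrow> u = 0)"
proof -
  have "(transpose A ** A) *v u = 0 \<longleftrightarrow> A *v u = 0" for u
  proof
    assume "(transpose A ** A) *v u = 0"
    then have "(A *v u) \<bullet> (A *v u) = 0" using bilinear_gram[where Y=A and x=u and y=u] by simp
    then show "A *v u = 0" by simp
  qed (simp add: matrix_vector_mul_assoc[symmetric])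
  then show ?thesis by (simp add: invertible_iff_ker)
qed

context
  fixes A :: "real^'c^'n"
  assumes gram: "invertible (transpose A ** A)"
begin

lemma proj_mult_vector: "proj A *v y = A *v (matrix_inv (transpose A ** A) *v (transpose A *v y))"
  by (simp add: proj_def matrix_vector_mul_assoc[symmetric])

lemma resid_mult_vector: "resid A *v y = y - proj A *v y"
  by (simp add: resid_def matrix_vector_mult_diff_rdistrib)

lemma resid_decomp: "y = resid A *v y + A *v (matrix_inv (transpose A ** A) *v (transpose A *v y))"
  by (simp add: resid_mult_vector proj_mult_vector)

lemma transpose_mult_resid: "transpose A *v (resid A *v y) = 0"
proof -
  have "transpose A *v (A *v (matrix_inv (transpose A ** A) *v (transpose A *v y)))
      = (transpose A ** A) *v (matrix_inv (transpose A ** A) *v (transpose A *v y))"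
    by (metis matrix_vector_mul_assoc)
  then show ?thesis
    by (simp add: resid_mult_vector proj_mult_vector matrix_vector_mult_diff_distrib
        matrix_inv_cancel_right[OF gram])
qed

lemma proj_mult_range: "proj A *v (A *v u) = A *v u"
  unfolding proj_mult_vector
  by (simp add: matrix_vector_mul_assoc matrix_inv_left[OF gram])

lemma resid_mult_range: "resid A *v (A *v u) = 0"
  by (simp add: resid_mult_vector proj_mult_range)

lemma proj_mult_resid: "proj A *v (resid A *v y) = 0"
  by (simp add: proj_mult_vector transpose_mult_resid)

lemma inner_range_resid: "(A *v u) \<bullet> (resid A *v y) = 0"
  by (metis inner_transpose_matrix_vector transpose_mult_resid inner_zero_right)

lemma inner_resid: "x \<bullet> (resid A *v y) = (resid A *v x) \<bullet> (resid A *v y)"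
proof -
  have "x \<bullet> (resid A *v y)
      = (resid A *v x + A *v (matrix_inv (transpose A ** A) *v (transpose A *v x))) \<bullet> (resid A *v y)"
    using resid_decomp by metis
  then show ?thesis by (simp add: inner_add_left inner_range_resid)
qed

lemma sym_matrix_resid: "sym_matrix (resid A)"
  unfolding sym_matrix_def by (metis inner_resid inner_commute)

lemma sym_matrix_proj: "sym_matrix (proj A)"
  using sym_matrix_resid unfolding sym_matrix_def
  by (simp add: resid_mult_vector inner_diff_left inner_diff_right inner_commute)

lemma quadratic_form_resid: "y \<bullet> (resid A *v y) = (norm (resid A *v y))\<^sup>2"
  using inner_resid[of y y] by (simp add: power2_norm_eq_inner)

lemma psd_matrix_resid: "psd_matrix (resid A)"
  unfolding psd_matrix_def by (simp add: quadratic_form_resid)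

lemma resid_eq_0_imp_range: "resid A *v y = 0 \<Longrightarrow> \<exists>u. y = A *v u"
  using resid_decomp[of y] by auto

lemma resid_eq_if_normal:
  assumes "transpose A *v (y - A *v u) = 0"
  shows "resid A *v y = y - A *v u"
proof -
  have "transpose A *v y = (transpose A ** A) *v u"
    using assms by (simp add: matrix_vector_mult_diff_distrib matrix_vector_mul_assoc)
  then show ?thesis
    by (simp add: resid_mult_vector proj_mult_vector matrix_inv_cancel_left[OF gram])
qed

lemma least_squares_normal:
  "transpose A *v (y - A *v (matrix_inv (transpose A ** A) *v (transpose A *v y))) = 0"
  using transpose_mult_resid[of y] by (simp add: resid_mult_vector proj_mult_vector)

lemma least_squares_min:
  "(norm (y - A *v (matrix_inv (transpose A ** A) *v (transpose A *v y))))\<^sup>2 \<le> (norm (y - A *v b))\<^sup>2"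
proof -
  define c where "c = matrix_inv (transpose A ** A) *v (transpose A *v y)"
  define r where "r = y - A *v c"
  have "y - A *v b = r + A *v (c - b)" by (simp add: r_def matrix_vector_mult_diff_distrib)
  then have "(norm (y - A *v b))\<^sup>2 = (norm r)\<^sup>2 + (norm (A *v (c - b)))\<^sup>2 + 2 * (r \<bullet> (A *v (c - b)))"
    by (simp add: power2_norm_eq_inner inner_add_left inner_add_right inner_commute)
  also have "r \<bullet> (A *v (c - b)) = 0"
    using least_squares_normal[of y] by (simp add: inner_matrix_vector_transpose r_def c_def)
  finally show ?thesis by (simp add: r_def c_def)
qed

lemma invertible_resid_congruence:
  assumes indep: "\<And>u w. Y *v u = A *v w \<Longrightarrow> u = 0"
  shows "invertible (transpose Y ** resid A ** Y)"
  unfolding invertible_iff_ker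
proof (intro allI impI)
  fix u assume "(transpose Y ** resid A ** Y) *v u = 0"
  then have "u \<bullet> ((transpose Y ** resid A ** Y) *v u) = 0" by simp
  then have "resid A *v (Y *v u) = 0" by (simp add: bilinear_congruence quadratic_form_resid)
  then obtain w where "Y *v u = A *v w" using resid_eq_0_imp_range by blast
  then show "u = 0" by (rule indep)
qed

end

section \<open>Block matrices\<close>

definition join :: "real^'a \<Rightarrow> real^'b \<Rightarrow> real^('a::finite + 'b::finite)" where
  "join u w = (\<chi> j. case j of Inl a \<Rightarrow> u $ a | Inr b \<Rightarrow> w $ b)"

lemma lead_join [simp]: "lead (join u w) = u"
  by (simp add: lead_def join_def vec_eq_iff)

lemma trail_join [simp]: "trail (join u w) = w"
  by (simp add: trail_def join_def vec_eq_iff)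

lemma lead_0 [simp]: "lead 0 = 0"
  by (simp add: lead_def vec_eq_iff)

lemma trail_0 [simp]: "trail 0 = 0"
  by (simp add: trail_def vec_eq_iff)

lemma join_eq_0_iff: "join u w = 0 \<longleftrightarrow> u = 0 \<and> w = 0"
proof
  assume j: "join u w = 0"
  have "lead (join u w) = 0" "trail (join u w) = 0" by (simp_all add: j)
  then show "u = 0 \<and> w = 0" by simp
qed (simp add: join_def vec_eq_iff split: sum.split)

lemma lead_diff: "lead (a - b) = lead a - lead b"
  by (simp add: lead_def vec_eq_iff)

lemma hcat_mult_vector:
  fixes A :: "real^'a^'n" and B :: "real^'b^'n"
  shows "hcat A B *v v = A *v lead v + B *v trail v"
proof -
  have split: "(\<Sum>j\<in>UNIV. f j) = (\<Sum>a\<in>UNIV. f (Inl a)) + (\<Sum>b\<in>UNIV. f (Inr b))"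
    for f :: "'a + 'b \<Rightarrow> real"
    using sum.Plus[of "UNIV::'a set" "UNIV::'b set" f] by (simp add: comp_def)
  show ?thesis
    by (simp add: hcat_def matrix_vector_mult_def lead_def trail_def vec_eq_iff split)
qed

lemma transpose_hcat_mult_vector:
  fixes A :: "real^'a^'n" and B :: "real^'b^'n"
  shows "transpose (hcat A B) *v r = join (transpose A *v r) (transpose B *v r)"
  by (simp add: transpose_def matrix_vector_mult_def hcat_def join_def vec_eq_iff split: sum.split)

lemma transpose_hcat_eq_0_iff:
  "transpose (hcat A B) *v r = 0 \<longleftrightarrow> transpose A *v r = 0 \<and> transpose B *v r = 0"
  by (simp add: transpose_hcat_mult_vector join_eq_0_iff)

lemma hcat_cols_independent:
  assumes "invertible (transpose (hcat A B) ** hcat A B)" and "A *v u = B *v w"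
  shows "u = 0 \<and> w = 0"
proof -
  have "hcat A B *v join u (- w) = 0"
    using assms(2) by (simp add: hcat_mult_vector matrix_vector_mult_uminus)
  then have "join u (- w) = 0" using assms(1) invertible_gram_iff by blast
  then show ?thesis by (simp add: join_eq_0_iff)
qed

section \<open>The instrumental variables regressions\<close>

locale iv_regression =
  fixes Y1 :: "real^'k^'n" and Y2 :: "real^'n" and Z1 :: "real^'p1^'n" and Z2 :: "real^'p2^'n"
  assumes gram_Z: "invertible (transpose (Zmat Z1 Z2) ** Zmat Z1 Z2)"
    and gram_X: "invertible (transpose (Xmat Y1 Z1) ** Xmat Y1 Z1)"
    and gram_PX: "invertible (transpose (Xmat Y1 Z1) ** proj (Zmat Z1 Z2) ** Xmat Y1 Z1)"
    and gram_XV: "invertible (transpose (hcat (Xmat Y1 Z1) (Vhat Y1 Z1 Z2))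
                                ** hcat (Xmat Y1 Z1) (Vhat Y1 Z1 Z2))"
begin

abbreviation Z where "Z \<equiv> Zmat Z1 Z2"
abbreviation X where "X \<equiv> Xmat Y1 Z1"
abbreviation V where "V \<equiv> Vhat Y1 Z1 Z2"
abbreviation Yh where "Yh \<equiv> Yhat1 Y1 Z1 Z2"
abbreviation rho where "rho \<equiv> rho_cf Y1 Y2 Z1 Z2"

lemma gram_Z1: "invertible (transpose Z1 ** Z1)"
  unfolding invertible_gram_iff
proof (intro allI impI)
  fix u assume "Z1 *v u = 0"
  then have "Z1 *v u = Z2 *v 0" by simp
  then show "u = 0" using hcat_cols_independent[OF gram_Z[unfolded Zmat_def]] by blast
qed

lemma Vhat_mult: "V *v a = resid Z *v (Y1 *v a)"
  by (simp add: Vhat_def matrix_vector_mul_assoc)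

lemma Yhat_mult: "Yh *v a = proj Z *v (Y1 *v a)"
  by (simp add: Yhat1_def matrix_vector_mul_assoc)

lemma Y1_split: "Y1 *v a = Yh *v a + V *v a"
  by (simp add: Vhat_mult Yhat_mult resid_mult_vector[OF gram_Z])

lemma inner_Yhat_V: "(Yh *v a) \<bullet> (V *v b) = 0"
  by (simp add: Yhat_mult Vhat_mult proj_mult_vector[OF gram_Z] inner_range_resid[OF gram_Z])

lemma transpose_Z1_V: "transpose Z1 *v (V *v a) = 0"
  using transpose_mult_resid[OF gram_Z]
  by (simp add: Vhat_mult Zmat_def transpose_hcat_eq_0_iff)

lemma inner_V_Z1: "(V *v a) \<bullet> (Z1 *v b) = 0"
  by (metis inner_transpose_matrix_vector transpose_Z1_V inner_zero_right inner_commute)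

lemma resid_Z1_V: "resid Z1 *v (V *v a) = V *v a"
  using resid_eq_if_normal[OF gram_Z1, of "V *v a" 0] by (simp add: transpose_Z1_V)

lemma proj_Z_X: "proj Z *v (X *v v) = Yh *v lead v + Z1 *v trail v"
proof -
  have "proj Z *v (Z1 *v b) = Z1 *v b" for b
    using proj_mult_range[OF gram_Z, of "join b 0"] by (simp add: Zmat_def hcat_mult_vector)
  then show ?thesis
    by (simp add: Xmat_def hcat_mult_vector matrix_vector_right_distrib Yhat_mult)
qed

lemma proj_Z_X_eq: "proj Z *v (X *v v) = X *v v - V *v lead v"
  unfolding proj_Z_X by (simp add: Xmat_def hcat_mult_vector Y1_split algebra_simps)

definition Yhat_gram :: "real^'k^'k" where
  "Yhat_gram = transpose Yh ** resid Z1 ** Yh"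

definition Y1_gram :: "real^'k^'k" where
  "Y1_gram = transpose Y1 ** resid Z1 ** Y1"

definition V_gram :: "real^'k^'k" where
  "V_gram = transpose V ** V"

lemma hmat_eq: "hmat Y1 Z1 Z2 s t = s *\<^sub>R matrix_inv Yhat_gram - t *\<^sub>R matrix_inv Y1_gram"
  by (simp add: hmat_def Let_def Yhat_gram_def Y1_gram_def)

lemma Y1_gram_eq: "Y1_gram = Yhat_gram + V_gram"
proof (rule matrix_eq_if_bilinear_eq)
  fix x y
  have "x \<bullet> (Y1_gram *v y) = (Yh *v x + V *v x) \<bullet> (resid Z1 *v (Yh *v y) + V *v y)"
    by (simp add: Y1_gram_def bilinear_congruence Y1_split matrix_vector_right_distrib resid_Z1_V)
  also have "\<dots> = x \<bullet> (Yhat_gram *v y) + (V *v x) \<bullet> (resid Z1 *v (Yh *v y)) + x \<bullet> (V_gram *v y)"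
    by (simp add: Yhat_gram_def V_gram_def bilinear_congruence bilinear_gram
        inner_add_left inner_add_right inner_Yhat_V)
  also have "(V *v x) \<bullet> (resid Z1 *v (Yh *v y)) = 0"
    using sym_matrix_resid[OF gram_Z1] unfolding sym_matrix_def
    by (metis resid_Z1_V inner_Yhat_V inner_commute)
  finally show "x \<bullet> (Y1_gram *v y) = x \<bullet> ((Yhat_gram + V_gram) *v y)"
    by (simp add: matrix_vector_mult_add_rdistrib inner_add_right)
qed

lemma sym_matrix_Yhat_gram: "sym_matrix Yhat_gram"
  unfolding Yhat_gram_def by (rule sym_matrix_congruence[OF sym_matrix_resid[OF gram_Z1]])

lemma psd_matrix_Yhat_gram: "psd_matrix Yhat_gram"
  unfolding Yhat_gram_def by (rule psd_matrix_congruence[OF psd_matrix_resid[OF gram_Z1]])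

lemma sym_matrix_Y1_gram: "sym_matrix Y1_gram"
  unfolding Y1_gram_def by (rule sym_matrix_congruence[OF sym_matrix_resid[OF gram_Z1]])

lemma psd_matrix_Y1_gram: "psd_matrix Y1_gram"
  unfolding Y1_gram_def by (rule psd_matrix_congruence[OF psd_matrix_resid[OF gram_Z1]])

lemma sym_matrix_V_gram: "sym_matrix V_gram"
  unfolding V_gram_def by (rule sym_matrix_gram)

lemma psd_matrix_V_gram: "psd_matrix V_gram"
  unfolding V_gram_def by (rule psd_matrix_gram)

lemma invertible_Y1_gram: "invertible Y1_gram"
  unfolding Y1_gram_def
proof (rule invertible_resid_congruence[OF gram_Z1])
  fix u w assume "Y1 *v u = Z1 *v w"
  then show "u = 0" using hcat_cols_independent[OF gram_X[unfolded Xmat_def]] by blast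
qed

lemma invertible_Yhat_gram: "invertible Yhat_gram"
  unfolding Yhat_gram_def
proof (rule invertible_resid_congruence[OF gram_Z1])
  fix u w assume "Yh *v u = Z1 *v w"
  then have "proj Z *v (X *v join u (- w)) = 0"
    by (simp add: proj_Z_X matrix_vector_mult_uminus)
  then have "(transpose X ** proj Z ** X) *v join u (- w) = 0"
    by (simp add: matrix_mult3_vector)
  then have "join u (- w) = 0" using gram_PX unfolding invertible_iff_ker by blast
  then show "u = 0" by (simp add: join_eq_0_iff)
qed

lemma invertible_cf_gram: "invertible (transpose V ** resid X ** V)"
proof (rule invertible_resid_congruence[OF gram_X])
  fix u w assume "V *v u = X *v w"
  then show "u = 0" using hcat_cols_independent[OF gram_XV, of w u] by simp
qed

definition cf_resid :: "real^'n" where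
  "cf_resid = Y2 - X *v theta_cf Y1 Y2 Z1 Z2 - V *v rho"

lemma cf_resid_least_squares:
  "cf_resid = Y2 - hcat X V *v (matrix_inv (transpose (hcat X V) ** hcat X V) *v (transpose (hcat X V) *v Y2))"
  by (simp add: cf_resid_def hcat_mult_vector theta_cf_def rho_cf_def cf_coef_def Let_def algebra_simps)

lemma cf_normal_equations: "transpose X *v cf_resid = 0" "transpose V *v cf_resid = 0"
  using least_squares_normal[OF gram_XV, of Y2]
  by (simp_all add: cf_resid_least_squares[symmetric] transpose_hcat_eq_0_iff)

lemma ols_normal_equations: "transpose X *v (Y2 - X *v theta_ols Y1 Y2 Z1) = 0"
  unfolding theta_ols_def Let_def by (rule least_squares_normal[OF gram_X])

lemma theta_2sls_eq_theta_cf: "theta_2sls Y1 Y2 Z1 Z2 = theta_cf Y1 Y2 Z1 Z2"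
proof -
  have XPr: "transpose X *v (proj Z *v cf_resid) = 0"
  proof (rule vec_eq_if_inner_eq)
    fix v
    have "v \<bullet> (transpose X *v (proj Z *v cf_resid)) = (proj Z *v (X *v v)) \<bullet> cf_resid"
      using sym_matrix_proj[OF gram_Z] unfolding sym_matrix_def
      by (simp add: inner_transpose_matrix_vector)
    also have "\<dots> = v \<bullet> (transpose X *v cf_resid) - lead v \<bullet> (transpose V *v cf_resid)"
      by (simp add: proj_Z_X_eq inner_diff_left inner_transpose_matrix_vector)
    finally show "v \<bullet> (transpose X *v (proj Z *v cf_resid)) = v \<bullet> 0"
      by (simp add: cf_normal_equations)
  qed
  have "proj Z *v (V *v rho) = 0" by (simp add: Vhat_mult proj_mult_resid[OF gram_Z])
  then have "proj Z *v Y2 = proj Z *v cf_resid + proj Z *v (X *v theta_cf Y1 Y2 Z1 Z2)"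
    by (simp add: cf_resid_def algebra_simps)
  then have "transpose X *v (proj Z *v Y2)
      = (transpose X ** proj Z ** X) *v theta_cf Y1 Y2 Z1 Z2"
    by (simp add: matrix_vector_right_distrib XPr matrix_mult3_vector)
  then show ?thesis
    by (simp add: theta_2sls_def Let_def matrix_inv_cancel_left[OF gram_PX])
qed

lemma sigma2_u_le_sigma2_ols: "sigma2_u Y1 Y2 Z1 Z2 \<le> sigma2_ols Y1 Y2 Z1"
proof -
  have "(norm cf_resid)\<^sup>2 \<le> (norm (Y2 - hcat X V *v join (theta_ols Y1 Y2 Z1) 0))\<^sup>2"
    unfolding cf_resid_least_squares by (rule least_squares_min[OF gram_XV])
  then have "(norm cf_resid)\<^sup>2 \<le> (norm (Y2 - X *v theta_ols Y1 Y2 Z1))\<^sup>2"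
    by (simp add: hcat_mult_vector)
  then show ?thesis
    unfolding sigma2_u_def sigma2_ols_def cf_resid_def[symmetric]
    by (simp add: divide_right_mono)
qed

lemma sigma2_ols_le_sigma2_2sls: "sigma2_ols Y1 Y2 Z1 \<le> sigma2_2sls Y1 Y2 Z1 Z2"
  using least_squares_min[OF gram_X, of Y2 "theta_2sls Y1 Y2 Z1 Z2"]
  unfolding sigma2_ols_def sigma2_2sls_def theta_ols_def Let_def
  by (simp add: divide_right_mono)

definition beta_diff :: "real^'k" where
  "beta_diff = beta_ols Y1 Y2 Z1 - beta_2sls Y1 Y2 Z1 Z2"

definition wald_numerator :: real where
  "wald_numerator = rho \<bullet> ((transpose V ** resid X ** V) *v rho)"

lemma wald_numerator_nonneg: "0 \<le> wald_numerator"
  using psd_matrix_congruence[OF psd_matrix_resid[OF gram_X]]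
  unfolding psd_matrix_def wald_numerator_def by blast

lemma lead_theta_diff: "lead (theta_ols Y1 Y2 Z1 - theta_cf Y1 Y2 Z1 Z2) = beta_diff"
  by (simp add: beta_diff_def beta_ols_def beta_2sls_def theta_2sls_eq_theta_cf lead_diff)

text \<open>The vector below is the control-function residual minus the OLS residual.\<close>
lemma transpose_X_fit_gap:
  "transpose X *v (X *v (theta_ols Y1 Y2 Z1 - theta_cf Y1 Y2 Z1 Z2) - V *v rho) = 0"
proof -
  have "X *v (theta_ols Y1 Y2 Z1 - theta_cf Y1 Y2 Z1 Z2) - V *v rho
      = cf_resid - (Y2 - X *v theta_ols Y1 Y2 Z1)"
    by (simp add: cf_resid_def algebra_simps)
  then show ?thesis
    by (simp add: matrix_vector_mult_diff_distrib[of _ cf_resid] cf_normal_equations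
        ols_normal_equations)
qed

lemma Y1_gram_beta_diff: "Y1_gram *v beta_diff = V_gram *v rho"
proof -
  define del where "del = theta_ols Y1 Y2 Z1 - theta_cf Y1 Y2 Z1 Z2"
  define s where "s = X *v del - V *v rho"
  have "transpose Y1 *v s = 0" and Z1s: "transpose Z1 *v s = 0"
    using transpose_X_fit_gap by (simp_all add: s_def del_def Xmat_def transpose_hcat_eq_0_iff)
  have "Y1 *v beta_diff = s + V *v rho - Z1 *v trail del"
    by (simp add: s_def Xmat_def hcat_mult_vector lead_theta_diff[folded del_def, symmetric])
  then have M1: "resid Z1 *v (Y1 *v beta_diff) = s + V *v rho"
    using resid_eq_if_normal[OF gram_Z1, of s 0] Z1s
    by (simp add: matrix_vector_mult_diff_distrib matrix_vector_right_distrib resid_Z1_V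
        resid_mult_range[OF gram_Z1])
  show ?thesis
  proof (rule vec_eq_if_inner_eq)
    fix v
    have "v \<bullet> (Y1_gram *v beta_diff) = (Y1 *v v) \<bullet> (s + V *v rho)"
      by (simp add: Y1_gram_def bilinear_congruence M1)
    also have "\<dots> = (Y1 *v v) \<bullet> (V *v rho)"
      using \<open>transpose Y1 *v s = 0\<close>
      by (simp add: inner_add_right inner_transpose_matrix_vector[symmetric])
    also have "\<dots> = v \<bullet> (V_gram *v rho)"
      by (simp add: Y1_split inner_add_left inner_Yhat_V V_gram_def bilinear_gram)
    finally show "v \<bullet> (Y1_gram *v beta_diff) = v \<bullet> (V_gram *v rho)" .
  qed
qed

lemma wald_numerator_eq: "wald_numerator = rho \<bullet> (V_gram *v rho) - beta_diff \<bullet> (V_gram *v rho)"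
proof -
  define del where "del = theta_ols Y1 Y2 Z1 - theta_cf Y1 Y2 Z1 Z2"
  have "transpose X *v (V *v rho - X *v del) = 0"
    using transpose_X_fit_gap by (simp add: del_def matrix_vector_mult_diff_distrib)
  then have resid_X_V: "resid X *v (V *v rho) = V *v rho - X *v del"
    by (rule resid_eq_if_normal[OF gram_X])
  have "(V *v rho) \<bullet> (X *v del) = (V *v rho) \<bullet> (Y1 *v beta_diff)"
    by (simp add: Xmat_def hcat_mult_vector lead_theta_diff[folded del_def] inner_add_right inner_V_Z1)
  also have "\<dots> = (V *v beta_diff) \<bullet> (V *v rho)"
    by (simp add: Y1_split inner_add_right inner_commute[of "V *v rho"] inner_Yhat_V)
  finally have "(V *v rho) \<bullet> (X *v del) = beta_diff \<bullet> (V_gram *v rho)"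
    by (simp add: V_gram_def bilinear_gram)
  then show ?thesis
    by (simp add: wald_numerator_def bilinear_congruence resid_X_V inner_diff_right
        V_gram_def bilinear_gram)
qed

lemma tCF_eq:
  assumes "sigma2_u Y1 Y2 Z1 Z2 \<noteq> 0"
  shows "tCF Y1 Y2 Z1 Z2 = wald_numerator / sigma2_u Y1 Y2 Z1 Z2"
proof -
  let ?G = "transpose V ** resid X ** V" and ?s = "sigma2_u Y1 Y2 Z1 Z2"
  have "matrix_inv (?s *\<^sub>R matrix_inv ?G) = (1 / ?s) *\<^sub>R ?G"
    using matrix_inv_scaleR[OF invertible_matrix_inv[OF invertible_cf_gram] assms]
    by (simp add: matrix_inv_matrix_inv[OF invertible_cf_gram])
  then show ?thesis
    by (simp add: tCF_def Let_def wald_numerator_def scaleR_matrix_vector_assoc[symmetric])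
qed

lemma hmat_same_scale: "hmat Y1 Z1 Z2 s s = s *\<^sub>R hmat Y1 Z1 Z2 1 1"
  by (simp add: hmat_eq scaleR_diff_right)

lemma hmat_split: "hmat Y1 Z1 Z2 s t = hmat Y1 Z1 Z2 s s + (s - t) *\<^sub>R matrix_inv Y1_gram"
  by (simp add: hmat_eq algebra_simps)

lemma sym_matrix_hmat_one: "sym_matrix (hmat Y1 Z1 Z2 1 1)"
  by (simp add: hmat_eq sym_matrix_diff sym_matrix_matrix_inv sym_matrix_Yhat_gram
      sym_matrix_Y1_gram invertible_Yhat_gram invertible_Y1_gram)

text \<open>Partialling out \<open>Z\<^sub>1\<close>, the Gram matrix of \<open>Y\<^sub>1\<close> is that of \<open>Y\<^sub>1\<close>'s fitted part plus the
  positive semidefinite \<open>V'V\<close>; inversion reverses the order.\<close>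
lemma psd_matrix_hmat_one: "psd_matrix (hmat Y1 Z1 Z2 1 1)"
  unfolding psd_matrix_def
proof
  fix x
  have "x \<bullet> (matrix_inv Y1_gram *v x) \<le> x \<bullet> (matrix_inv Yhat_gram *v x)"
    using quadratic_form_matrix_inv_antimono[OF sym_matrix_Yhat_gram psd_matrix_Yhat_gram
        invertible_Yhat_gram psd_matrix_V_gram] invertible_Y1_gram
    by (simp add: Y1_gram_eq)
  then show "0 \<le> x \<bullet> (hmat Y1 Z1 Z2 1 1 *v x)"
    by (simp add: hmat_eq matrix_vector_mult_diff_rdistrib inner_diff_right)
qed

lemma hausman_form:
  assumes "invertible (hmat Y1 Z1 Z2 1 1)"
  shows "beta_diff \<bullet> (matrix_inv (hmat Y1 Z1 Z2 1 1) *v beta_diff) = wald_numerator"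
proof -
  have "invertible (matrix_inv Yhat_gram - matrix_inv Y1_gram)" using assms by (simp add: hmat_eq)
  from hausman_quadratic_form[OF Y1_gram_eq sym_matrix_Yhat_gram sym_matrix_V_gram
      invertible_Yhat_gram invertible_Y1_gram this Y1_gram_beta_diff]
  show ?thesis by (simp add: hmat_eq wald_numerator_eq)
qed

lemma tH_same_scale:
  assumes "s \<noteq> 0" "invertible (hmat Y1 Z1 Z2 s s)"
  shows "tH Y1 Y2 Z1 Z2 s s = wald_numerator / s"
proof -
  have inv1: "invertible (hmat Y1 Z1 Z2 1 1)"
    using scalar_invertible[OF _ assms(2), of "1 / s"] assms(1) by (simp add: hmat_same_scale[of s])
  have "matrix_inv (hmat Y1 Z1 Z2 s s) = (1 / s) *\<^sub>R matrix_inv (hmat Y1 Z1 Z2 1 1)"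
    by (simp add: hmat_same_scale[of s] matrix_inv_scaleR[OF inv1 assms(1)])
  then show ?thesis
    by (simp add: tH_def Let_def beta_diff_def[symmetric] scaleR_matrix_vector_assoc[symmetric]
        hausman_form[OF inv1])
qed

lemma tH_antimono:
  assumes "t \<le> s" "0 \<le> s" "invertible (hmat Y1 Z1 Z2 s s)" "invertible (hmat Y1 Z1 Z2 s t)"
  shows "tH Y1 Y2 Z1 Z2 s t \<le> tH Y1 Y2 Z1 Z2 s s"
proof -
  have "tH Y1 Y2 Z1 Z2 s t
      = beta_diff \<bullet> (matrix_inv (hmat Y1 Z1 Z2 s s + (s - t) *\<^sub>R matrix_inv Y1_gram) *v beta_diff)"
    by (simp add: tH_def Let_def beta_diff_def[symmetric] hmat_split[of s t])
  also have "\<dots> \<le> beta_diff \<bullet> (matrix_inv (hmat Y1 Z1 Z2 s s) *v beta_diff)"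
  proof (rule quadratic_form_matrix_inv_antimono)
    show "sym_matrix (hmat Y1 Z1 Z2 s s)"
      by (simp add: hmat_same_scale[of s] sym_matrix_scaleR sym_matrix_hmat_one)
    show "psd_matrix (hmat Y1 Z1 Z2 s s)"
      using assms(2) by (simp add: hmat_same_scale[of s] psd_matrix_scaleR psd_matrix_hmat_one)
    show "psd_matrix ((s - t) *\<^sub>R matrix_inv Y1_gram)"
      using assms(1) by (simp add: psd_matrix_scaleR psd_matrix_matrix_inv psd_matrix_Y1_gram
          invertible_Y1_gram)
    show "invertible (hmat Y1 Z1 Z2 s s + (s - t) *\<^sub>R matrix_inv Y1_gram)"
      using assms(4) by (simp add: hmat_split[of s t])
  qed (rule assms(3))
  also have "\<dots> = tH Y1 Y2 Z1 Z2 s s"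
    by (simp add: tH_def Let_def beta_diff_def[symmetric])
  finally show ?thesis .
qed

end

theorem mainTheorem4:
  fixes Y1 :: "real^'k^'n" and Y2 :: "real^'n"
    and Z1 :: "real^'p1^'n" and Z2 :: "real^'p2^'n"
  defines "Z \<equiv> Zmat Z1 Z2" and "X \<equiv> Xmat Y1 Z1" and "V \<equiv> Vhat Y1 Z1 Z2"
  assumes "invertible (transpose Z ** Z)"
    and "invertible (transpose X ** X)"
    and "invertible (transpose X ** proj Z ** X)"
    and "invertible (transpose (hcat X V) ** hcat X V)"
    and "sigma2_u Y1 Y2 Z1 Z2 > 0"
    and "sigma2_ols Y1 Y2 Z1 > 0"
    and "sigma2_2sls Y1 Y2 Z1 Z2 > 0"
    and "invertible (hmat Y1 Z1 Z2 (sigma2_ols Y1 Y2 Z1) (sigma2_ols Y1 Y2 Z1))"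
    and "invertible (hmat Y1 Z1 Z2 (sigma2_2sls Y1 Y2 Z1 Z2) (sigma2_2sls Y1 Y2 Z1 Z2))"
    and "invertible (hmat Y1 Z1 Z2 (sigma2_2sls Y1 Y2 Z1 Z2) (sigma2_ols Y1 Y2 Z1))"
  shows "sigma2_2sls Y1 Y2 Z1 Z2 \<ge> sigma2_ols Y1 Y2 Z1
       \<and> sigma2_ols Y1 Y2 Z1 \<ge> sigma2_u Y1 Y2 Z1 Z2
       \<and> tCF Y1 Y2 Z1 Z2 \<ge> tH Y1 Y2 Z1 Z2 (sigma2_ols Y1 Y2 Z1) (sigma2_ols Y1 Y2 Z1)
       \<and> tH Y1 Y2 Z1 Z2 (sigma2_ols Y1 Y2 Z1) (sigma2_ols Y1 Y2 Z1)
           \<ge> tH Y1 Y2 Z1 Z2 (sigma2_2sls Y1 Y2 Z1 Z2) (sigma2_2sls Y1 Y2 Z1 Z2)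
       \<and> tH Y1 Y2 Z1 Z2 (sigma2_2sls Y1 Y2 Z1 Z2) (sigma2_2sls Y1 Y2 Z1 Z2)
           \<ge> tH Y1 Y2 Z1 Z2 (sigma2_2sls Y1 Y2 Z1 Z2) (sigma2_ols Y1 Y2 Z1)"
proof -
  interpret iv: iv_regression Y1 Y2 Z1 Z2
    by unfold_locales (use assms(4-7) in \<open>simp_all add: Z_def X_def V_def\<close>)
  let ?su = "sigma2_u Y1 Y2 Z1 Z2" and ?s1 = "sigma2_ols Y1 Y2 Z1"
    and ?s2 = "sigma2_2sls Y1 Y2 Z1 Z2" and ?q = iv.wald_numerator
  have s: "?su \<le> ?s1" "?s1 \<le> ?s2"
    by (rule iv.sigma2_u_le_sigma2_ols, rule iv.sigma2_ols_le_sigma2_2sls)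
  have "tCF Y1 Y2 Z1 Z2 = ?q / ?su"
    using assms(8) by (simp add: iv.tCF_eq)
  moreover have "tH Y1 Y2 Z1 Z2 ?s1 ?s1 = ?q / ?s1" "tH Y1 Y2 Z1 Z2 ?s2 ?s2 = ?q / ?s2"
    using assms(9,10,11,12) by (simp_all add: iv.tH_same_scale)
  moreover have "tH Y1 Y2 Z1 Z2 ?s2 ?s1 \<le> tH Y1 Y2 Z1 Z2 ?s2 ?s2"
    using s assms(10,12,13) by (simp add: iv.tH_antimono)
  moreover have "?q / ?s1 \<le> ?q / ?su" "?q / ?s2 \<le> ?q / ?s1"
    using s assms(8-10) iv.wald_numerator_nonneg by (simp_all add: divide_left_mono)
  ultimately show ?thesis using s by simp
qed

end
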